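(* Let $\mathbb{K}$ be an algebraically closed field of characteristic zero, $\mathcal{C}\subset\mathbb{K}^2$ an affine irreducible plane curve defined by an irreducible polynomial $f(y_1,y_2)$, $A=(a,b)\in\mathbb{K}^2$ and $d\in\mathbb{K}\setminus\{0\}$. Let $\mathfrak{B}(\mathcal{C},A,d)\subset\mathbb{K}^2\times\mathbb{K}^2\times\mathbb{K}$ be the set of $(\bar x,\bar y,w)$, $\bar x=(x_1,x_2)$, $\bar y=(y_1,y_2)$, satisfying $f(y_1,y_2)=0$, $(x_1-y_1)^2+(x_2-y_2)^2=d^2$, $(y_2-b)(x_1-y_1)-(y_1-a)(x_2-y_2)=0$, $w\big((y_1-a)^2+(y_2-b)^2\big)=1$, and let $\pi_1(\bar x,\bar y,w)=\bar x$, $\pi_2(\bar x,\bar y,w)=\bar y$ be the projections restricted to $\mathfrak{B}(\mathcal{C},A,d)$. Let $\mathcal{C}_0=\{(p_1,p_2)\in\mathcal{C}:(p_1-a)^2+(p_2-b)^2\neq0\}$. Then: (1) If $\mathcal{C}$ is not the circle $(y_1-a)^2+(y_2-b)^2=d^2$, then (1.1) for every $\bar x\in\pi_1(\mathfrak{B}(\mathcal{C},A,d))\setminus\{A\}$ one has $\mathrm{Card}(\pi_1^{-1}(\bar x))\le 2$, and (1.2) if $A\in\pi_1(\mathfrak{B}(\mathcal{C},A,d))$ then $\mathrm{Card}(\pi_1^{-1}(A))\le 2\deg(\mathcal{C})$. (2) For every $\bar y\in\mathcal{C}_0$, $\mathrm{Card}(\pi_2^{-1}(\bar y))=2$.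
   Context: $\deg(\mathcal{C})$ is the degree of $f$. *)

theory Defs
  imports "HOL-Computational_Algebra.Polynomial_Factorial"
begin

text \<open>Bivariate polynomials in y1, y2 are represented as nested univariate polynomials
  'a poly poly: the outer variable is y2, the coefficients are polynomials in y1.\<close>

definition eval2 :: "'a::comm_semiring_1 poly poly \<Rightarrow> 'a \<Rightarrow> 'a \<Rightarrow> 'a" where
  "eval2 f y1 y2 = poly (poly f [:y2:]) y1"

definition total_degree :: "'a::zero poly poly \<Rightarrow> nat" where
  "total_degree f = Max (insert 0 {i + degree (coeff f i) | i. coeff f i \<noteq> 0})"

definition alg_closed_field :: "'a::field itself \<Rightarrow> bool" where
  "alg_closed_field _ \<longleftrightarrow> (\<forall>p::'a poly. degree p > 0 \<longrightarrow> (\<exists>z. poly p z = 0))"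

definition curve :: "'a::comm_semiring_1 poly poly \<Rightarrow> ('a \<times> 'a) set" where
  "curve f = {(y1, y2). eval2 f y1 y2 = 0}"

definition incidence_B ::
  "'a::field poly poly \<Rightarrow> 'a \<times> 'a \<Rightarrow> 'a \<Rightarrow> (('a \<times> 'a) \<times> ('a \<times> 'a) \<times> 'a) set" where
  "incidence_B f A d = {((x1, x2), (y1, y2), w).
      eval2 f y1 y2 = 0 \<and>
      (x1 - y1)^2 + (x2 - y2)^2 = d^2 \<and>
      (y2 - snd A) * (x1 - y1) - (y1 - fst A) * (x2 - y2) = 0 \<and>
      w * ((y1 - fst A)^2 + (y2 - snd A)^2) = 1}"

definition pi1 :: "('a \<times> 'a) \<times> ('a \<times> 'a) \<times> 'a \<Rightarrow> 'a \<times> 'a" where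
  "pi1 t = fst t"

definition pi2 :: "('a \<times> 'a) \<times> ('a \<times> 'a) \<times> 'a \<Rightarrow> 'a \<times> 'a" where
  "pi2 t = fst (snd t)"

end

theory Submission
  imports Defs
begin

text \<open>Write A = (a, b) and |v|^2 = v1^2 + v2^2. A point of the fibre of pi1 over x is fixed by
  y, and the collinearity condition puts y on the line through x and A. For x \<noteq> A this gives
  y = x - t (x - A) with t^2 |x - A|^2 = d^2, hence at most two points. Over x = A the fibre is
  in bijection with the intersection of the curve with the circle of radius d about A. An
  irreducible f vanishing on that circle is, up to a unit, the circle equation (divide f by the
  circle equation, which is monic in y2, and check that the remainder, linear in y2, vanishes);
  otherwise pulling f back along a rational parametrisation of the circle gives a nonzero
  polynomial of degree at most 2 deg f whose roots cover the intersection. Over y in C0 the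
  fibre consists of x = y + t (y - A) with t^2 = d^2 / |y - A|^2, which has exactly two
  solutions in an algebraically closed field of characteristic zero.\<close>

lemma alg_closed_field_square_root:
  fixes c :: "'a::field"
  assumes "alg_closed_field TYPE('a)"
  shows "\<exists>r. r^2 = c"
proof -
  have "degree [:-c, 0, 1:] > 0" by simp
  then obtain r where "poly [:-c, 0, 1:] r = 0"
    using assms unfolding alg_closed_field_def by blast
  then show ?thesis by (auto simp: power2_eq_square algebra_simps)
qed

lemma square_roots_eq:
  fixes r :: "'a::idom"
  shows "{t. t^2 = r^2} = {r, -r}"
  by (auto simp: power2_eq_iff)

lemma finite_square_roots: "finite {t::'a::idom. t^2 = c}"
  and card_square_roots_le_2: "card {t::'a::idom. t^2 = c} \<le> 2"
proof -
  have "finite {t::'a. t^2 = c} \<and> card {t::'a. t^2 = c} \<le> 2"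
  proof (cases "\<exists>r. r^2 = c")
    case True
    then obtain r where "c = r^2" by auto
    then show ?thesis by (simp add: square_roots_eq card_insert_le_m1)
  qed auto
  then show "finite {t::'a. t^2 = c}" "card {t::'a. t^2 = c} \<le> 2" by auto
qed

lemma card_square_roots_eq_2:
  fixes c :: "'a::field_char_0"
  assumes "alg_closed_field TYPE('a)" and "c \<noteq> 0"
  shows "card {t. t^2 = c} = 2"
proof -
  obtain r where r: "r^2 = c" using alg_closed_field_square_root[OF assms(1)] by blast
  with assms(2) have "r \<noteq> -r" by auto
  then show ?thesis using r by (auto simp: square_roots_eq)
qed

lemma parallel_imp_multiple:
  fixes e1 e2 z1 z2 :: "'a::field"
  assumes "(e1, e2) \<noteq> (0, 0)" and "e2 * z1 = e1 * z2"
  shows "\<exists>t. z1 = t * e1 \<and> z2 = t * e2"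
proof (cases "e1 = 0")
  case True
  with assms show ?thesis by (intro exI[of _ "z2 / e2"]) (auto simp: field_simps)
next
  case False
  with assms show ?thesis by (intro exI[of _ "z1 / e1"]) (auto simp: field_simps)
qed

lemma poly_eq_0_if_roots_cofinite:
  fixes p :: "'a::{idom, ring_char_0} poly"
  assumes "finite S" and "\<And>x. x \<notin> S \<Longrightarrow> poly p x = 0"
  shows "p = 0"
proof (rule ccontr)
  assume "p \<noteq> 0"
  then have "finite {x. poly p x = 0}" by (rule poly_roots_finite)
  moreover have "UNIV \<subseteq> S \<union> {x. poly p x = 0}" using assms(2) by auto
  ultimately show False using assms(1) infinite_UNIV_char_0 by (meson finite_Un finite_subset)
qed

lemma poly_as_sum_atMost:
  fixes p :: "'a::comm_semiring_1 poly"
  assumes "degree p \<le> n"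
  shows "poly p x = (\<Sum>i\<le>n. coeff p i * x ^ i)"
proof -
  have "(\<Sum>i\<le>degree p. coeff p i * x ^ i) = (\<Sum>i\<le>n. coeff p i * x ^ i)"
    by (rule sum.mono_neutral_left) (use assms in \<open>auto simp: coeff_eq_0\<close>)
  then show ?thesis by (simp add: poly_altdef)
qed

lemma eval2_add [simp]: "eval2 (p + q) y1 y2 = eval2 p y1 y2 + eval2 q y1 y2"
  and eval2_mult [simp]: "eval2 (p * q) y1 y2 = eval2 p y1 y2 * eval2 q y1 y2"
  and eval2_1 [simp]: "eval2 1 y1 y2 = 1"
  by (simp_all add: eval2_def)

lemma eval2_unit_nonzero:
  fixes q :: "'a::field poly poly"
  assumes "q dvd 1"
  shows "eval2 q y1 y2 \<noteq> 0"
proof -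
  obtain q' where "1 = q * q'" using assms by (elim dvdE)
  then have "eval2 q y1 y2 * eval2 q' y1 y2 = 1" by (metis eval2_mult eval2_1)
  then show ?thesis by auto
qed

lemma eval2_degree_le_1:
  assumes "degree r \<le> 1"
  shows "eval2 r y1 y2 = poly (coeff r 0) y1 + y2 * poly (coeff r 1) y1"
  using poly_as_sum_atMost[OF assms, of "[:y2:]"] by (simp add: eval2_def algebra_simps)

lemma le_total_degree:
  fixes f :: "'a::zero poly poly"
  assumes "coeff (coeff f k) j \<noteq> 0"
  shows "k + j \<le> total_degree f"
proof -
  have "finite {i + degree (coeff f i) | i. coeff f i \<noteq> 0}"
  proof (rule finite_subset)
    show "{i + degree (coeff f i) | i. coeff f i \<noteq> 0} \<subseteq> (\<lambda>i. i + degree (coeff f i)) ` {..degree f}"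
      using le_degree by fastforce
  qed auto
  then have "k + degree (coeff f k) \<le> total_degree f"
    using assms unfolding total_degree_def by (intro Max_ge) auto
  moreover have "j \<le> degree (coeff f k)" using assms le_degree by blast
  ultimately show ?thesis by simp
qed

lemma eval2_as_double_sum:
  fixes f :: "'a::comm_semiring_1 poly poly"
  defines "n \<equiv> total_degree f"
  shows "eval2 f y1 y2 = (\<Sum>k\<le>n. \<Sum>j\<le>n. coeff (coeff f k) j * y1^j * y2^k)"
proof -
  have deg_coeff: "degree (coeff f k) \<le> n" for k
    using le_total_degree[of f k "degree (coeff f k)"] unfolding n_def
    by (cases "coeff f k = 0") auto
  have deg: "degree f \<le> n"
    using le_total_degree[of f "degree f" "degree (coeff f (degree f))"] unfolding n_def
    by (cases "f = 0") auto
  have "eval2 f y1 y2 = (\<Sum>k\<le>n. poly (coeff f k) y1 * y2 ^ k)"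
    unfolding eval2_def poly_as_sum_atMost[OF deg] by (simp add: poly_sum)
  also have "\<dots> = (\<Sum>k\<le>n. \<Sum>j\<le>n. coeff (coeff f k) j * y1^j * y2^k)"
    unfolding poly_as_sum_atMost[OF deg_coeff] by (simp add: sum_distrib_right)
  finally show ?thesis .
qed

definition circle :: "'a \<times> 'a \<Rightarrow> 'a \<Rightarrow> ('a::comm_ring_1 \<times> 'a) set" where
  "circle A d = {(y1, y2). (y1 - fst A)^2 + (y2 - snd A)^2 = d^2}"

definition circle_poly :: "'a \<times> 'a \<Rightarrow> 'a \<Rightarrow> 'a::comm_ring_1 poly poly" where
  "circle_poly A d = [: [:fst A^2 + snd A^2 - d^2, -2 * fst A, 1:], [:-2 * snd A:], 1 :]"

lemma eval2_circle_poly: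
  "eval2 (circle_poly A d) y1 y2 = (y1 - fst A)^2 + (y2 - snd A)^2 - d^2"
  by (simp add: circle_poly_def eval2_def algebra_simps power2_eq_square)

lemma curve_circle_poly: "curve (circle_poly A d) = circle A d"
  by (auto simp: curve_def circle_def eval2_circle_poly)

lemma circle_poly_not_unit:
  fixes d :: "'a::field"
  shows "\<not> circle_poly A d dvd 1"
  using eval2_unit_nonzero[of "circle_poly A d" "fst A + d" "snd A"]
  by (auto simp: eval2_circle_poly)

lemma linear_in_y2_vanishing_on_circle:
  fixes r :: "'a::field_char_0 poly poly"
  assumes "alg_closed_field TYPE('a)"
    and deg: "degree r \<le> 1" and vanish: "circle (a, b) d \<subseteq> curve r"
  shows "r = 0"
proof -
  have coeffs_vanish: "poly (coeff r 0) y1 = 0 \<and> poly (coeff r 1) y1 = 0"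
    if y1: "y1 \<notin> {a + d, a - d}" for y1
  proof -
    obtain s where s: "s^2 = d^2 - (y1 - a)^2"
      using alg_closed_field_square_root[OF assms(1)] by blast
    have "(y1 - a)^2 \<noteq> d^2" using y1 by (auto simp: power2_eq_iff algebra_simps)
    with s have "s \<noteq> 0" by auto
    \<comment> \<open>the vertical line through y1 meets the circle in the two distinct points (y1, b \<plusminus> s)\<close>
    have on_curve: "(y1, b + s) \<in> curve r" "(y1, b - s) \<in> curve r"
      using vanish s by (auto simp: circle_def)
    define R0 R1 where "R0 = poly (coeff r 0) y1" and "R1 = poly (coeff r 1) y1"
    have eqs: "R0 + (b + s) * R1 = 0" "R0 + (b - s) * R1 = 0"
      using on_curve by (simp_all add: R0_def R1_def curve_def eval2_degree_le_1[OF deg])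
    have "(2 * s) * R1 = (R0 + (b + s) * R1) - (R0 + (b - s) * R1)"
      by (simp add: algebra_simps)
    with eqs \<open>s \<noteq> 0\<close> have "R1 = 0" by simp
    with eqs show ?thesis by (simp add: R0_def R1_def)
  qed
  have "coeff r 0 = 0" "coeff r 1 = 0"
    using coeffs_vanish by (auto intro: poly_eq_0_if_roots_cofinite[of "{a + d, a - d}"])
  with deg show "r = 0"
    by (metis One_nat_def le_Suc_eq le_zero_eq leading_coeff_0_iff)
qed

lemma irreducible_curve_containing_circle:
  fixes f :: "'a::field_char_0 poly poly"
  assumes alg_closed: "alg_closed_field TYPE('a)" and irred: "irreducible f"
    and circle_sub: "circle (a, b) d \<subseteq> curve f"
  shows "curve f = circle (a, b) d"
proof -
  let ?g = "circle_poly (a, b) d"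
  obtain q r where qr: "pseudo_divmod f ?g = (q, r)" by (metis surj_pair)
  have "?g \<noteq> 0" "degree ?g = 2" "coeff ?g (degree ?g) = 1" by (simp_all add: circle_poly_def)
  \<comment> \<open>?g is monic in y2, so pseudo-division by it is an honest division\<close>
  with pseudo_divmod[OF _ qr] have f: "f = ?g * q + r" and "degree r \<le> 1" by auto
  moreover have "circle (a, b) d \<subseteq> curve r"
    using circle_sub by (auto simp: f curve_def circle_def eval2_circle_poly)
  ultimately have "r = 0" using linear_in_y2_vanishing_on_circle[OF alg_closed] by blast
  with f irred circle_poly_not_unit have "q dvd 1" by (metis add_0_right irreducibleD)
  then have "curve f = curve ?g"
    using eval2_unit_nonzero[of q] by (auto simp: f \<open>r = 0\<close> curve_def)
  then show ?thesis by (simp add: curve_circle_poly)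
qed

text \<open>Let i be a square root of -1. The rational map sending u to
  (circle_num_x a d (u) / u, circle_num_y i b d (u) / u) parametrises the circle of radius d
  about (a, b): a point (y1, y2) of the circle has parameter u = (y1 - a) + i (y2 - b), for
  which d^2 / u = (y1 - a) - i (y2 - b). The polynomial circle_pullback is f composed with
  this map, with the denominators cleared by the factor u^(total_degree f).\<close>

definition circle_num_x :: "'a::field \<Rightarrow> 'a \<Rightarrow> 'a poly" where
  "circle_num_x a d = [:d^2 / 2, a, 1 / 2:]"

definition circle_num_y :: "'a::field \<Rightarrow> 'a \<Rightarrow> 'a \<Rightarrow> 'a poly" where
  "circle_num_y i b d = [:-(d^2) / (2 * i), b, 1 / (2 * i):]"

definition circle_pullback :: "'a::field poly poly \<Rightarrow> 'a \<Rightarrow> 'a \<Rightarrow> 'a \<Rightarrow> 'a \<Rightarrow> 'a poly" where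
  "circle_pullback f i a b d = (let n = total_degree f in
     \<Sum>k\<le>n. \<Sum>j\<le>n. smult (coeff (coeff f k) j)
       (monom 1 (n - k - j) * circle_num_x a d ^ j * circle_num_y i b d ^ k))"

lemma degree_circle_pullback_le: "degree (circle_pullback f i a b d) \<le> 2 * total_degree f"
  unfolding circle_pullback_def Let_def
proof (intro degree_sum_le finite_atMost)
  fix k j
  let ?n = "total_degree f"
  show "degree (smult (coeff (coeff f k) j)
      (monom 1 (?n - k - j) * circle_num_x a d ^ j * circle_num_y i b d ^ k)) \<le> 2 * ?n"
  proof (cases "coeff (coeff f k) j = 0")
    case False
    then have "k + j \<le> ?n" by (rule le_total_degree)
    have "degree (monom (1::'a) (?n - k - j) * circle_num_x a d ^ j * circle_num_y i b d ^ k)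
        \<le> degree (monom (1::'a) (?n - k - j)) + degree (circle_num_x a d ^ j) + degree (circle_num_y i b d ^ k)"
      by (meson add_le_mono degree_mult_le le_refl order_trans)
    also have "\<dots> \<le> (?n - k - j) + j * 2 + k * 2"
      by (intro add_mono degree_monom_le order_trans[OF degree_power_le])
        (simp_all add: circle_num_x_def circle_num_y_def)
    also have "\<dots> \<le> 2 * ?n" using \<open>k + j \<le> ?n\<close> by simp
    finally show ?thesis by (meson degree_smult_le order_trans)
  qed simp
qed

lemma poly_circle_pullback:
  fixes f :: "'a::field poly poly"
  assumes "u \<noteq> 0"
  shows "poly (circle_pullback f i a b d) u =
    u ^ total_degree f * eval2 f (poly (circle_num_x a d) u / u) (poly (circle_num_y i b d) u / u)"
proof -
  let ?n = "total_degree f" and ?X = "poly (circle_num_x a d) u" and ?Y = "poly (circle_num_y i b d) u"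
  have rescale: "coeff (coeff f k) j * (u ^ (?n - k - j) * ?X ^ j * ?Y ^ k) =
      u ^ ?n * (coeff (coeff f k) j * (?X / u) ^ j * (?Y / u) ^ k)" for k j
  proof (cases "coeff (coeff f k) j = 0")
    case False
    then have "k + j \<le> ?n" by (rule le_total_degree)
    then have "u ^ ?n = u ^ (?n - k - j) * u ^ j * u ^ k" by (simp flip: power_add)
    with assms show ?thesis by (simp add: field_simps)
  qed simp
  have "poly (circle_pullback f i a b d) u =
      (\<Sum>k\<le>?n. \<Sum>j\<le>?n. coeff (coeff f k) j * (u ^ (?n - k - j) * ?X ^ j * ?Y ^ k))"
    by (simp add: circle_pullback_def Let_def poly_sum poly_monom)
  also have "\<dots> = u ^ ?n * eval2 f (?X / u) (?Y / u)"
    by (simp only: rescale eval2_as_double_sum sum_distrib_left)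
  finally show ?thesis .
qed

lemma circle_parametrisation:
  fixes a b d i :: "'a::field_char_0"
  assumes i: "i^2 = -1" and "d \<noteq> 0" and "y \<in> circle (a, b) d"
  shows "\<exists>u. u \<noteq> 0 \<and> y = (poly (circle_num_x a d) u / u, poly (circle_num_y i b d) u / u)"
proof -
  obtain y1 y2 where y_eq: "y = (y1, y2)" by fastforce
  with assms(3) have y: "(y1, y2) \<in> circle (a, b) d" by simp
  define p q where "p = y1 - a" and "q = y2 - b"
  define u v where "u = p + i * q" and "v = p - i * q"
  have "u * v = p^2 - i^2 * q^2" by (simp add: u_def v_def algebra_simps power2_eq_square)
  with i y have uv: "u * v = d^2" by (simp add: circle_def p_def q_def)
  with \<open>d \<noteq> 0\<close> have "u \<noteq> 0" by auto
  from i have "i \<noteq> 0" by auto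
  have "poly (circle_num_x a d) u = u * (a + (u + v) / 2)"
    by (simp add: circle_num_x_def flip: uv) (simp add: field_simps power2_eq_square)
  also have "(u + v) / 2 = p" by (simp add: u_def v_def field_simps)
  finally have x: "poly (circle_num_x a d) u = u * y1" by (simp add: p_def)
  have "poly (circle_num_y i b d) u = u * (b + (u - v) / (2 * i))"
    using \<open>i \<noteq> 0\<close> by (simp add: circle_num_y_def flip: uv) (simp add: field_simps power2_eq_square)
  also have "(u - v) / (2 * i) = q" using \<open>i \<noteq> 0\<close> by (simp add: u_def v_def field_simps)
  finally have "poly (circle_num_y i b d) u = u * y2" by (simp add: q_def)
  with x \<open>u \<noteq> 0\<close> show ?thesis by (intro exI[of _ u]) (simp add: y_eq)
qed

lemma curve_inter_circle_finite_card_le: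
  fixes f :: "'a::field_char_0 poly poly"
  assumes alg_closed: "alg_closed_field TYPE('a)" and irred: "irreducible f" and "d \<noteq> 0"
    and not_circle: "curve f \<noteq> circle (a, b) d"
  shows "finite (curve f \<inter> circle (a, b) d) \<and> card (curve f \<inter> circle (a, b) d) \<le> 2 * total_degree f"
proof -
  obtain i :: 'a where i: "i^2 = -1" using alg_closed_field_square_root[OF alg_closed] by blast
  define P where "P = circle_pullback f i a b d"
  define param where "param u = (poly (circle_num_x a d) u / u, poly (circle_num_y i b d) u / u)" for u
  have onto: "\<exists>u. u \<noteq> 0 \<and> y = param u" if "y \<in> circle (a, b) d" for y
    using circle_parametrisation[OF i \<open>d \<noteq> 0\<close> that] by (simp add: param_def)
  have on_curve_iff: "param u \<in> curve f \<longleftrightarrow> poly P u = 0" if "u \<noteq> 0" for u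
    using poly_circle_pullback[OF that, of f i a b d] that
    by (simp add: P_def param_def curve_def)
  have "P \<noteq> 0"
  proof
    assume "P = 0"
    have "circle (a, b) d \<subseteq> curve f"
    proof
      fix y assume "y \<in> circle (a, b) d"
      then obtain u where "u \<noteq> 0" "y = param u" using onto by blast
      with on_curve_iff \<open>P = 0\<close> show "y \<in> curve f" by simp
    qed
    with irreducible_curve_containing_circle[OF alg_closed irred] not_circle
    show False by blast
  qed

  then have roots: "finite {u. poly P u = 0}" "card {u. poly P u = 0} \<le> 2 * total_degree f"
    using poly_roots_finite order_trans[OF card_poly_roots_bound degree_circle_pullback_le]
    by (auto simp: P_def)
  have "curve f \<inter> circle (a, b) d \<subseteq> param ` {u. poly P u = 0}"
  proof
    fix y assume "y \<in> curve f \<inter> circle (a, b) d"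
    moreover from this obtain u where "u \<noteq> 0" "y = param u" using onto by blast
    ultimately show "y \<in> param ` {u. poly P u = 0}" using on_curve_iff by blast
  qed
  with roots show ?thesis by (meson card_image_le card_mono finite_imageI finite_subset order_trans)
qed

lemma mult_eq_1_imp_eq_divide:
  fixes w N :: "'a::field"
  assumes "w * N = 1"
  shows "w = 1 / N"
  using assms by (metis divide_inverse inverse_unique mult.commute mult_1)

lemma pi1_fiber_finite_card_le_2:
  fixes f :: "'a::field poly poly"
  assumes "d \<noteq> 0" and "x \<noteq> (a, b)"
  shows "finite (incidence_B f (a, b) d \<inter> pi1 -` {x}) \<and> card (incidence_B f (a, b) d \<inter> pi1 -` {x}) \<le> 2"
proof -
  obtain x1 x2 where x: "x = (x1, x2)" by fastforce
  define e1 e2 where "e1 = x1 - a" and "e2 = x2 - b"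
  define N where "N = e1^2 + e2^2"
  define point where
    "point t = (x, (x1 - t * e1, x2 - t * e2), 1 / ((x1 - t * e1 - a)^2 + (x2 - t * e2 - b)^2))" for t
  have e: "(e1, e2) \<noteq> (0, 0)" using assms(2) by (auto simp: x e1_def e2_def)
  have fiber: "incidence_B f (a, b) d \<inter> pi1 -` {x} \<subseteq> point ` {t. t^2 = d^2 / N}"
  proof
    fix el assume "el \<in> incidence_B f (a, b) d \<inter> pi1 -` {x}"
    then obtain y1 y2 w where el: "el = (x, (y1, y2), w)"
      and on_circle: "(x1 - y1)^2 + (x2 - y2)^2 = d^2"
      and collinear: "(y2 - b) * (x1 - y1) - (y1 - a) * (x2 - y2) = 0"
      and w: "w * ((y1 - a)^2 + (y2 - b)^2) = 1"
      by (auto simp: incidence_B_def pi1_def x)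
    from collinear have "e2 * (x1 - y1) = e1 * (x2 - y2)" by (simp add: e1_def e2_def algebra_simps)
    then obtain t where t: "x1 - y1 = t * e1" "x2 - y2 = t * e2"
      using parallel_imp_multiple[OF e] by blast
    with on_circle have "t^2 * N = d^2" by (simp add: N_def algebra_simps power2_eq_square)
    moreover from this \<open>d \<noteq> 0\<close> have "N \<noteq> 0" by auto
    ultimately have "t^2 = d^2 / N" by (simp add: eq_divide_eq)
    moreover have "el = point t"
      using t mult_eq_1_imp_eq_divide[OF w] by (simp add: el point_def algebra_simps)
    ultimately show "el \<in> point ` {t. t^2 = d^2 / N}" by blast
  qed
  have "finite (point ` {t. t^2 = d^2 / N})" by (simp add: finite_square_roots)
  moreover have "card (point ` {t. t^2 = d^2 / N}) \<le> 2"
    by (rule order_trans[OF card_image_le[OF finite_square_roots] card_square_roots_le_2])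
  ultimately show ?thesis using fiber by (meson card_mono finite_subset order_trans)
qed

lemma pi1_fiber_centre_eq_image:
  fixes f :: "'a::field poly poly"
  assumes "d \<noteq> 0"
  shows "incidence_B f (a, b) d \<inter> pi1 -` {(a, b)} =
    (\<lambda>y. ((a, b), y, 1 / d^2)) ` (curve f \<inter> circle (a, b) d)"
proof (intro equalityI subsetI)
  fix el assume "el \<in> incidence_B f (a, b) d \<inter> pi1 -` {(a, b)}"
  then obtain y1 y2 w where el: "el = ((a, b), (y1, y2), w)" and "eval2 f y1 y2 = 0"
    and "(a - y1)^2 + (b - y2)^2 = d^2" and w: "w * ((y1 - a)^2 + (y2 - b)^2) = 1"
    by (auto simp: incidence_B_def pi1_def)
  moreover from this have on_circle: "(y1 - a)^2 + (y2 - b)^2 = d^2"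
    by (simp add: power2_commute)
  moreover from w on_circle have "w = 1 / d^2" by (simp add: mult_eq_1_imp_eq_divide)
  ultimately show "el \<in> (\<lambda>y. ((a, b), y, 1 / d^2)) ` (curve f \<inter> circle (a, b) d)"
    by (auto simp: curve_def circle_def)
next
  fix el assume "el \<in> (\<lambda>y. ((a, b), y, 1 / d^2)) ` (curve f \<inter> circle (a, b) d)"
  then obtain y1 y2 where el: "el = ((a, b), (y1, y2), 1 / d^2)" and "eval2 f y1 y2 = 0"
    and on_circle: "(y1 - a)^2 + (y2 - b)^2 = d^2"
    by (auto simp: curve_def circle_def)
  moreover from on_circle have "(a - y1)^2 + (b - y2)^2 = d^2" by (simp add: power2_commute)
  moreover have "(y2 - b) * (a - y1) - (y1 - a) * (b - y2) = 0" by (simp add: algebra_simps)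
  ultimately show "el \<in> incidence_B f (a, b) d \<inter> pi1 -` {(a, b)}"
    using assms by (simp add: incidence_B_def pi1_def)
qed

lemma pi2_fiber_eq_image:
  fixes f :: "'a::field poly poly" and a b y1 y2 :: 'a
  defines "N \<equiv> (y1 - a)^2 + (y2 - b)^2"
  assumes "(y1, y2) \<in> curve f" and "N \<noteq> 0"
  shows "incidence_B f (a, b) d \<inter> pi2 -` {(y1, y2)} =
    (\<lambda>t. ((y1 + t * (y1 - a), y2 + t * (y2 - b)), (y1, y2), 1 / N)) ` {t. t^2 = d^2 / N}"
proof (intro equalityI subsetI)
  fix el assume "el \<in> incidence_B f (a, b) d \<inter> pi2 -` {(y1, y2)}"
  then obtain x1 x2 w where el: "el = ((x1, x2), (y1, y2), w)"
    and on_circle: "(x1 - y1)^2 + (x2 - y2)^2 = d^2"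
    and collinear: "(y2 - b) * (x1 - y1) - (y1 - a) * (x2 - y2) = 0"
    and w: "w * N = 1"
    by (auto simp: incidence_B_def pi2_def N_def)
  have "(y1 - a, y2 - b) \<noteq> (0, 0)" using \<open>N \<noteq> 0\<close> by (auto simp: N_def)
  with collinear obtain t where t: "x1 - y1 = t * (y1 - a)" "x2 - y2 = t * (y2 - b)"
    using parallel_imp_multiple by (metis eq_iff_diff_eq_0)
  with on_circle have "t^2 * N = d^2" by (simp add: N_def algebra_simps power2_eq_square)
  with \<open>N \<noteq> 0\<close> have "t^2 = d^2 / N" by (simp add: field_simps)
  moreover have "el = ((y1 + t * (y1 - a), y2 + t * (y2 - b)), (y1, y2), 1 / N)"
    using t mult_eq_1_imp_eq_divide[OF w] by (simp add: el algebra_simps)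
  ultimately show "el \<in> (\<lambda>t. ((y1 + t * (y1 - a), y2 + t * (y2 - b)), (y1, y2), 1 / N)) ` {t. t^2 = d^2 / N}"
    by blast
next
  fix el assume "el \<in> (\<lambda>t. ((y1 + t * (y1 - a), y2 + t * (y2 - b)), (y1, y2), 1 / N)) ` {t. t^2 = d^2 / N}"
  then obtain t where el: "el = ((y1 + t * (y1 - a), y2 + t * (y2 - b)), (y1, y2), 1 / N)"
    and t: "t^2 = d^2 / N" by blast
  have "(t * (y1 - a))^2 + (t * (y2 - b))^2 = t^2 * N"
    by (simp add: N_def power_mult_distrib distrib_left flip: right_diff_distrib)
  also have "\<dots> = d^2" using t \<open>N \<noteq> 0\<close> by simp
  finally have "(t * (y1 - a))^2 + (t * (y2 - b))^2 = d^2" .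
  moreover have "(y2 - b) * (t * (y1 - a)) - (y1 - a) * (t * (y2 - b)) = 0"
    by (simp add: algebra_simps)
  moreover have "1 / N * ((y1 - a)^2 + (y2 - b)^2) = 1" using \<open>N \<noteq> 0\<close> by (simp add: N_def)
  ultimately show "el \<in> incidence_B f (a, b) d \<inter> pi2 -` {(y1, y2)}"
    using assms(2) by (simp add: el incidence_B_def pi2_def curve_def)
qed

lemma card_pi2_fiber_eq_2:
  fixes f :: "'a::field_char_0 poly poly"
  assumes alg_closed: "alg_closed_field TYPE('a)" and "d \<noteq> 0"
    and "(y1, y2) \<in> curve f" and N: "(y1 - a)^2 + (y2 - b)^2 \<noteq> 0"
  shows "card (incidence_B f (a, b) d \<inter> pi2 -` {(y1, y2)}) = 2"
proof -
  let ?N = "(y1 - a)^2 + (y2 - b)^2"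
  have "inj (\<lambda>t. ((y1 + t * (y1 - a), y2 + t * (y2 - b)), (y1, y2), 1 / ?N))"
    using N by (intro injI) auto
  then have "card (incidence_B f (a, b) d \<inter> pi2 -` {(y1, y2)}) = card {t. t^2 = d^2 / ?N}"
    by (simp add: pi2_fiber_eq_image[OF assms(3) N] card_image inj_on_subset)
  also have "\<dots> = 2" using \<open>d \<noteq> 0\<close> N by (intro card_square_roots_eq_2[OF alg_closed]) simp
  finally show ?thesis .
qed

theorem lemma2:
  fixes f :: "'a::field_char_0 poly poly" and a b d :: 'a
  assumes alg_closed: "alg_closed_field TYPE('a)"
    and irred: "irreducible f"
    and d_nz: "d \<noteq> 0"
  defines "B \<equiv> incidence_B f (a, b) d"
    and "C0 \<equiv> {(p1, p2) \<in> curve f. (p1 - a)^2 + (p2 - b)^2 \<noteq> 0}"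
  shows "(curve f \<noteq> {(y1, y2). (y1 - a)^2 + (y2 - b)^2 = d^2} \<longrightarrow>
           (\<forall>x \<in> pi1 ` B - {(a, b)}.
              finite (B \<inter> pi1 -` {x}) \<and> card (B \<inter> pi1 -` {x}) \<le> 2) \<and>
           ((a, b) \<in> pi1 ` B \<longrightarrow>
              finite (B \<inter> pi1 -` {(a, b)}) \<and>
              card (B \<inter> pi1 -` {(a, b)}) \<le> 2 * total_degree f))
       \<and> (\<forall>y \<in> C0. card (B \<inter> pi2 -` {y}) = 2)"
proof (intro conjI impI ballI)
  fix x assume "x \<in> pi1 ` B - {(a, b)}"
  with pi1_fiber_finite_card_le_2[OF d_nz]
  show "finite (B \<inter> pi1 -` {x})" "card (B \<inter> pi1 -` {x}) \<le> 2" by (auto simp: B_def)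
next
  assume "curve f \<noteq> {(y1, y2). (y1 - a)^2 + (y2 - b)^2 = d^2}"
  then have "finite (curve f \<inter> circle (a, b) d)" "card (curve f \<inter> circle (a, b) d) \<le> 2 * total_degree f"
    using curve_inter_circle_finite_card_le[OF alg_closed irred d_nz] by (auto simp: circle_def)
  then show "finite (B \<inter> pi1 -` {(a, b)})" "card (B \<inter> pi1 -` {(a, b)}) \<le> 2 * total_degree f"
    by (auto simp: B_def pi1_fiber_centre_eq_image[OF d_nz] intro: order_trans[OF card_image_le])
next
  fix y assume "y \<in> C0"
  then show "card (B \<inter> pi2 -` {y}) = 2"
    using card_pi2_fiber_eq_2[OF alg_closed d_nz] by (auto simp: B_def C0_def)
qed

end
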